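(* Let $R$ be a commutative Dedekind domain with field of fractions $Q$, and for each maximal ideal $P$ let $R_P$ be the localization at $P$. Then the torsion submodule of $\prod_P Q/R_P$ (product over all maximal ideals $P$) is $\bigoplus_P Q/R_P$. If moreover $R$ is not semilocal, $|R|=\alpha$, the set of maximal ideals has cardinality $\beta$, and $\alpha<\alpha^\beta$, then $Q\oplus\prod_P Q/R_P\cong\prod_P Q/R_P$ as $R$-modules.
   Context: $Q/R_P\cong E(R/P)$, the injective envelope of $R/P$. *)

theory Defs
  imports Main "HOL-Computational_Algebra.Fraction_Field"
begin

text \<open>The Dedekind domain R is the whole type 'a (class idom, i.e. a commutative
 integral domain); Q is its fraction field 'a fract.  R embeds in Q via r \<mapsto> Fract r 1.\<close>

definition ideal :: "'a::comm_ring_1 set \<Rightarrow> bool" where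
  "ideal I \<longleftrightarrow> 0 \<in> I \<and> (\<forall>x\<in>I. \<forall>y\<in>I. x + y \<in> I) \<and> (\<forall>r x. x \<in> I \<longrightarrow> r * x \<in> I)"

definition prime_ideal :: "'a::comm_ring_1 set \<Rightarrow> bool" where
  "prime_ideal P \<longleftrightarrow> ideal P \<and> P \<noteq> UNIV \<and> (\<forall>a b. a * b \<in> P \<longrightarrow> a \<in> P \<or> b \<in> P)"

definition maximal_ideal :: "'a::comm_ring_1 set \<Rightarrow> bool" where
  "maximal_ideal P \<longleftrightarrow> ideal P \<and> P \<noteq> UNIV \<and>
     (\<forall>J. ideal J \<and> P \<subseteq> J \<longrightarrow> J = P \<or> J = UNIV)"

definition noetherian :: "'a::comm_ring_1 itself \<Rightarrow> bool" where
  "noetherian _ \<longleftrightarrow> (\<forall>I :: nat \<Rightarrow> 'a set. (\<forall>n. ideal (I n) \<and> I n \<subseteq> I (Suc n))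
       \<longrightarrow> (\<exists>N. \<forall>n\<ge>N. I n = I N))"

definition integral_over_R :: "'a::idom fract \<Rightarrow> bool" where
  "integral_over_R x \<longleftrightarrow> (\<exists>n::nat. \<exists>c::nat \<Rightarrow> 'a. n \<ge> 1 \<and>
       x ^ n + (\<Sum>i<n. Fract (c i) 1 * x ^ i) = 0)"

definition integrally_closed :: "'a::idom itself \<Rightarrow> bool" where
  "integrally_closed _ \<longleftrightarrow> (\<forall>x :: 'a fract. integral_over_R x \<longrightarrow> (\<exists>r. x = Fract r 1))"

definition dedekind_domain :: "'a::idom itself \<Rightarrow> bool" where
  "dedekind_domain T \<longleftrightarrow> noetherian T \<and> integrally_closed T \<and>
     (\<forall>P :: 'a set. prime_ideal P \<and> P \<noteq> {0} \<longrightarrow> maximal_ideal P)"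

definition maxideals :: "'a::comm_ring_1 set set" where
  "maxideals = {P. maximal_ideal P}"

definition loc :: "'a::idom set \<Rightarrow> 'a fract set" where
  "loc P = {Fract a s | a s. s \<notin> P}"

definition smultQ :: "'a::idom \<Rightarrow> 'a fract \<Rightarrow> 'a fract" where
  "smultQ r q = Fract r 1 * q"

text \<open>An element of \<Prod>_P Q/R_P is represented by a family f :: maximal ideal \<Rightarrow> Q
 (values at non-maximal arguments are irrelevant), two families representing the same
 element iff they agree in every component Q/R_P.  Module operations are the componentwise
 ones on representatives.\<close>
definition prod_eq :: "('a::idom set \<Rightarrow> 'a fract) \<Rightarrow> ('a set \<Rightarrow> 'a fract) \<Rightarrow> bool" where
  "prod_eq f g \<longleftrightarrow> (\<forall>P\<in>maxideals. f P - g P \<in> loc P)"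

definition in_torsion :: "('a::idom set \<Rightarrow> 'a fract) \<Rightarrow> bool" where
  "in_torsion f \<longleftrightarrow> (\<exists>r::'a. r \<noteq> 0 \<and> prod_eq (\<lambda>P. smultQ r (f P)) (\<lambda>_. 0))"

definition in_dsum :: "('a::idom set \<Rightarrow> 'a fract) \<Rightarrow> bool" where
  "in_dsum f \<longleftrightarrow> finite {P \<in> maxideals. f P \<notin> loc P}"

text \<open>Representatives of Q \<oplus> \<Prod>_P Q/R_P are pairs.\<close>
definition sum_eq :: "'a::idom fract \<times> ('a set \<Rightarrow> 'a fract) \<Rightarrow> 'a fract \<times> ('a set \<Rightarrow> 'a fract) \<Rightarrow> bool" where
  "sum_eq x y \<longleftrightarrow> fst x = fst y \<and> prod_eq (snd x) (snd y)"

text \<open>phi (on representatives) induces an R-module isomorphism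
 Q \<oplus> \<Prod>_P Q/R_P \<rightarrow> \<Prod>_P Q/R_P: well defined, additive, R-linear, injective, surjective.\<close>
definition is_iso_Q_plus_prod :: "('a::idom fract \<times> ('a set \<Rightarrow> 'a fract) \<Rightarrow> ('a set \<Rightarrow> 'a fract)) \<Rightarrow> bool" where
  "is_iso_Q_plus_prod \<phi> \<longleftrightarrow>
     (\<forall>x y. sum_eq x y \<longrightarrow> prod_eq (\<phi> x) (\<phi> y)) \<and>
     (\<forall>q f q' f'. prod_eq (\<phi> (q + q', \<lambda>P. f P + f' P)) (\<lambda>P. \<phi> (q, f) P + \<phi> (q', f') P)) \<and>
     (\<forall>r q f. prod_eq (\<phi> (smultQ r q, \<lambda>P. smultQ r (f P))) (\<lambda>P. smultQ r (\<phi> (q, f) P))) \<and>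
     (\<forall>x y. prod_eq (\<phi> x) (\<phi> y) \<longrightarrow> sum_eq x y) \<and>
     (\<forall>g. \<exists>x. prod_eq (\<phi> x) g)"

end

theory Submission
  imports Defs "HOL-Library.Function_Algebras" "HOL.Vector_Spaces" "HOL-Library.Nat_Bijection"
begin

(*
  In a Dedekind domain a nonzero r lies in only finitely many maximal
  ideals: otherwise the principal ideal R r would start an endless strictly ascending
  chain of nonzero ideals each lying in infinitely many maximal ideals (such an ideal
  is not prime, since nonzero primes are maximal, and one of the two ideals I + R a,
  I + R b for a b \<in> I, a, b \<notin> I, inherits the property), contradicting Noetherianity.
  Hence if r f is integral at every P, the component f P can be non-integral only at
  the finitely many P containing r; conversely, finitely many non-integral components
  are cleared by the product of their denominators.

  Choose pairwise distinct maximal ideals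
  G (n, m), arranged in countably many infinite blocks n, and regard families as a
  Q-vector space.  The families with bounded denominators on block n form a subspace
  L n containing all integral families, and the family e n with value 1/pi at a nonzero
  pi \<in> P for each P of block n is not in L n.  A Q-linear functional c n vanishing on
  L n with c n (e n) = 1 is thus well defined on the product of the Q/R_P and only sees
  block n.  Adding suitable multiples of the e n then shifts the coordinates
  (c 0, c 1, ...) by one place, which absorbs the extra summand Q.
*)


section \<open>Ideals\<close>

lemma ideal_0: "ideal I \<Longrightarrow> 0 \<in> I"
  and ideal_add: "ideal I \<Longrightarrow> x \<in> I \<Longrightarrow> y \<in> I \<Longrightarrow> x + y \<in> I"
  and ideal_mult: "ideal I \<Longrightarrow> x \<in> I \<Longrightarrow> r * x \<in> I"
  by (simp_all add: ideal_def)

lemma ideal_mult_right: "ideal I \<Longrightarrow> x \<in> I \<Longrightarrow> x * r \<in> I"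
  using ideal_mult[of I x r] by (simp add: mult.commute)

lemma ideal_zero: "ideal {0}"
  by (simp add: ideal_def)

definition ideal_extend :: "'a::comm_ring_1 set \<Rightarrow> 'a \<Rightarrow> 'a set" where
  "ideal_extend I a = {p + x * a | p x. p \<in> I}"

lemma ideal_extendI: "p \<in> I \<Longrightarrow> z = p + x * a \<Longrightarrow> z \<in> ideal_extend I a"
  unfolding ideal_extend_def by blast

lemma ideal_extendE:
  "z \<in> ideal_extend I a \<Longrightarrow> (\<And>p x. p \<in> I \<Longrightarrow> z = p + x * a \<Longrightarrow> thesis) \<Longrightarrow> thesis"
  unfolding ideal_extend_def by blast

lemma ideal_ideal_extend:
  assumes I: "ideal I" shows "ideal (ideal_extend I a)"
  unfolding ideal_def[of "ideal_extend I a"]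
proof (intro conjI ballI allI impI)
  show "0 \<in> ideal_extend I a" by (rule ideal_extendI[of 0 _ _ 0]) (simp_all add: ideal_0[OF I])
next
  fix y z assume "y \<in> ideal_extend I a" "z \<in> ideal_extend I a"
  then obtain p x p' x' where "p \<in> I" "p' \<in> I" "y = p + x * a" "z = p' + x' * a"
    by (elim ideal_extendE)
  then show "y + z \<in> ideal_extend I a"
    by (intro ideal_extendI[of "p + p'" _ _ "x + x'"]) (simp_all add: ideal_add[OF I] algebra_simps)
next
  fix r z assume "z \<in> ideal_extend I a"
  then obtain p x where "p \<in> I" "z = p + x * a" by (elim ideal_extendE)
  then show "r * z \<in> ideal_extend I a"
    by (intro ideal_extendI[of "r * p" _ _ "r * x"]) (simp_all add: ideal_mult[OF I] ideal_mult_right[OF I] algebra_simps)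
qed

lemma ideal_extend_superset: "ideal I \<Longrightarrow> I \<subseteq> ideal_extend I a"
  by (auto intro: ideal_extendI[of _ _ _ 0])

lemma ideal_extend_gen: "ideal I \<Longrightarrow> a \<in> ideal_extend I a"
  by (rule ideal_extendI[of 0 _ _ 1]) (simp_all add: ideal_0)

lemma ideal_extend_least:
  assumes "ideal P" "I \<subseteq> P" "a \<in> P" shows "ideal_extend I a \<subseteq> P"
  using assms by (auto elim!: ideal_extendE intro: ideal_add ideal_mult)

lemma maximal_ideal_ideal: "maximal_ideal P \<Longrightarrow> ideal P"
  and maximal_ideal_proper: "maximal_ideal P \<Longrightarrow> P \<noteq> UNIV"
  and maximal_ideal_max: "maximal_ideal P \<Longrightarrow> ideal J \<Longrightarrow> P \<subseteq> J \<Longrightarrow> J = P \<or> J = UNIV"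
  by (simp_all add: maximal_ideal_def)

lemma maximal_ideal_0: "maximal_ideal P \<Longrightarrow> 0 \<in> P"
  by (simp add: maximal_ideal_ideal ideal_0)

lemma maximal_ideal_1: "maximal_ideal P \<Longrightarrow> 1 \<notin> P"
  using ideal_mult_right[of P 1] by (auto simp: maximal_ideal_def)

text \<open>Maximal ideals are prime: if a \<notin> P then P + R a contains 1.\<close>

lemma maximal_ideal_prime:
  assumes P: "maximal_ideal P" and ab: "a * b \<in> P"
  shows "a \<in> P \<or> b \<in> P"
proof (rule ccontr)
  assume n: "\<not> (a \<in> P \<or> b \<in> P)"
  have iP: "ideal P" using P by (rule maximal_ideal_ideal)
  have "ideal_extend P a \<noteq> P" using ideal_extend_gen[OF iP, of a] n by auto
  then have "ideal_extend P a = UNIV"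
    using maximal_ideal_max[OF P ideal_ideal_extend[OF iP] ideal_extend_superset[OF iP]] by blast
  then obtain p x where px: "p \<in> P" "1 = p + x * a"
    by (metis UNIV_I ideal_extendE)
  have "b = b * (p + x * a)" using px(2) by simp
  also have "\<dots> = b * p + x * (a * b)" by (simp add: algebra_simps)
  also have "\<dots> \<in> P" using ideal_add[OF iP ideal_mult[OF iP px(1)] ideal_mult[OF iP ab]] .
  finally show False using n by simp
qed

lemma maximal_ideal_nonzero_notin: "maximal_ideal P \<Longrightarrow> s \<notin> P \<Longrightarrow> s \<noteq> 0"
  using maximal_ideal_0 by blast


section \<open>Finiteness of the maximal ideals above a nonzero element\<close>

text \<open>In a Noetherian ring no property of ideals can always be passed on to a strictly
  larger ideal: iterating the step would give a strictly ascending chain.\<close>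

lemma noetherian_no_unbounded_property:
  fixes T :: "'a::comm_ring_1 itself" and B :: "'a set \<Rightarrow> bool"
  assumes noeth: "noetherian T" and B_ideal: "\<And>I. B I \<Longrightarrow> ideal I"
    and ascend: "\<And>I. B I \<Longrightarrow> \<exists>J. B J \<and> I \<subset> J"
  shows "\<not> B I"
proof
  assume "B I"
  define next_ideal where "next_ideal = (\<lambda>I. SOME J. B J \<and> I \<subset> J)"
  have next_ideal: "B (next_ideal J) \<and> J \<subset> next_ideal J" if "B J" for J
    using someI_ex[OF ascend[OF that]] unfolding next_ideal_def .
  define C where "C n = (next_ideal ^^ n) I" for n
  have CB: "B (C n)" for n
    by (induction n) (simp_all add: C_def \<open>B I\<close> next_ideal)
  have C_strict: "C n \<subset> C (Suc n)" for n
    using next_ideal[OF CB[of n]] by (simp add: C_def)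
  have "\<forall>n. ideal (C n) \<and> C n \<subseteq> C (Suc n)" using CB C_strict B_ideal by blast
  then obtain N where N: "\<forall>n\<ge>N. C n = C N" using noeth[unfolded noetherian_def, rule_format, of C] by blast
  have "C (Suc N) = C N" using N[rule_format, of "Suc N"] by simp
  then show False using C_strict[of N] by simp
qed

text \<open>A nonzero ideal lying in infinitely many maximal ideals is not prime (a nonzero prime
  would be maximal), and one of its two extensions witnessing this inherits the property.\<close>

definition in_infinitely_many_maximal :: "'a::comm_ring_1 set \<Rightarrow> bool" where
  "in_infinitely_many_maximal I \<longleftrightarrow>
     ideal I \<and> I \<noteq> {0} \<and> infinite {P. maximal_ideal P \<and> I \<subseteq> P}"

lemma in_infinitely_many_maximal_ascend:
  fixes I :: "'a::idom set" and T :: "'a itself"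
  assumes D: "dedekind_domain T" and b: "in_infinitely_many_maximal I"
  shows "\<exists>J. in_infinitely_many_maximal J \<and> I \<subset> J"
proof -
  let ?above = "\<lambda>J. {P. maximal_ideal P \<and> J \<subseteq> P}"
  have iI: "ideal I" and nz: "I \<noteq> {0}" and inf: "infinite (?above I)"
    using b by (auto simp: in_infinitely_many_maximal_def)
  have "\<not> prime_ideal I"
  proof
    assume "prime_ideal I"
    then have mI: "maximal_ideal I" using D nz by (simp add: dedekind_domain_def)
    have "P = I" if "maximal_ideal P" "I \<subseteq> P" for P
      using maximal_ideal_max[OF mI maximal_ideal_ideal[OF that(1)] that(2)]
        maximal_ideal_proper[OF that(1)] by simp
    then have "?above I \<subseteq> {I}" by blast
    then show False using inf finite_subset by auto
  qed
  moreover have "I \<noteq> UNIV"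
  proof
    assume "I = UNIV"
    then have "?above I = {}" using maximal_ideal_proper by blast
    then show False using inf by (metis finite.emptyI)
  qed
  ultimately obtain a b where ab: "a * b \<in> I" "a \<notin> I" "b \<notin> I"
    using iI unfolding prime_ideal_def by blast
  have "P \<in> ?above (ideal_extend I a) \<union> ?above (ideal_extend I b)" if "P \<in> ?above I" for P
  proof -
    from that have P: "maximal_ideal P" and IP: "I \<subseteq> P" by auto
    have "a \<in> P \<or> b \<in> P" using maximal_ideal_prime[OF P] ab(1) IP by blast
    then show ?thesis using ideal_extend_least[OF maximal_ideal_ideal[OF P] IP] P by blast
  qed
  then have "infinite (?above (ideal_extend I a)) \<or> infinite (?above (ideal_extend I b))"
    using inf finite_subset[of "?above I"] by blast
  then obtain x where x: "x \<notin> I" "infinite (?above (ideal_extend I x))" using ab(2,3) by blast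
  have "ideal_extend I x \<noteq> {0}"
    using ideal_extend_superset[OF iI, of x] nz ideal_0[OF iI] by blast
  moreover have "I \<subset> ideal_extend I x"
    using ideal_extend_superset[OF iI] ideal_extend_gen[OF iI] x(1) by blast
  ultimately show ?thesis
    using x(2) ideal_ideal_extend[OF iI] unfolding in_infinitely_many_maximal_def by blast
qed

text \<open>Applied to the principal ideal R r = {0} + R r.\<close>

lemma finite_maximal_ideals_containing:
  fixes r :: "'a::idom" and T :: "'a itself"
  assumes D: "dedekind_domain T" and r: "r \<noteq> 0"
  shows "finite {P. maximal_ideal P \<and> r \<in> P}"
proof -
  let ?Rr = "ideal_extend {0} r"
  have "r \<in> P \<longleftrightarrow> ?Rr \<subseteq> P" if "maximal_ideal P" for P
    using ideal_extend_least[OF maximal_ideal_ideal[OF that]] maximal_ideal_0[OF that]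
      ideal_extend_gen[OF ideal_zero, of r] by blast
  then have eq: "{P. maximal_ideal P \<and> r \<in> P} = {P. maximal_ideal P \<and> ?Rr \<subseteq> P}" by blast
  have "?Rr \<noteq> {0}" using ideal_extend_gen[OF ideal_zero, of r] r by blast
  moreover have "\<not> in_infinitely_many_maximal ?Rr"
    using noetherian_no_unbounded_property[of T in_infinitely_many_maximal]
      D in_infinitely_many_maximal_ascend[OF D]
    by (auto simp: dedekind_domain_def in_infinitely_many_maximal_def)
  ultimately show ?thesis
    unfolding eq in_infinitely_many_maximal_def using ideal_ideal_extend[OF ideal_zero] by blast
qed


section \<open>The localizations R_P inside Q\<close>

lemma locI: "s \<notin> P \<Longrightarrow> Fract a s \<in> loc P"
  by (auto simp: loc_def)

lemma locE: "q \<in> loc P \<Longrightarrow> (\<And>a s. s \<notin> P \<Longrightarrow> q = Fract a s \<Longrightarrow> thesis) \<Longrightarrow> thesis"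
  by (auto simp: loc_def)

lemma loc_of_R: "maximal_ideal P \<Longrightarrow> Fract r 1 \<in> loc P"
  using maximal_ideal_1 locI by blast

lemma loc_0: "maximal_ideal P \<Longrightarrow> 0 \<in> loc P"
  using loc_of_R[of P 0] by (simp add: fract_collapse)

lemma loc_add:
  assumes P: "maximal_ideal P" and "x \<in> loc P" "y \<in> loc P" shows "x + y \<in> loc P"
proof -
  obtain a s b t where "s \<notin> P" "x = Fract a s" "t \<notin> P" "y = Fract b t"
    using assms(2,3) by (elim locE)
  moreover have "s * t \<notin> P" using maximal_ideal_prime[OF P] calculation by blast
  ultimately show ?thesis using maximal_ideal_nonzero_notin[OF P] by (simp add: locI)
qed

lemma loc_mult:
  assumes P: "maximal_ideal P" and "x \<in> loc P" "y \<in> loc P" shows "x * y \<in> loc P"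
proof -
  obtain a s b t where "s \<notin> P" "x = Fract a s" "t \<notin> P" "y = Fract b t"
    using assms(2,3) by (elim locE)
  moreover have "s * t \<notin> P" using maximal_ideal_prime[OF P] calculation by blast
  ultimately show ?thesis by (simp add: locI)
qed

lemma loc_mult_dvd:
  assumes P: "maximal_ideal P" and sx: "Fract s 1 * x \<in> loc P" and "s dvd r"
  shows "Fract r 1 * x \<in> loc P"
proof -
  obtain k where "r = s * k" using \<open>s dvd r\<close> by blast
  then have eq: "Fract r 1 * x = Fract k 1 * (Fract s 1 * x)" by (simp add: mult.commute)
  show ?thesis unfolding eq by (rule loc_mult[OF P loc_of_R[OF P] sx])
qed

lemma loc_div_mem:
  assumes P: "maximal_ideal P" and pi: "pi \<noteq> 0" "pi \<in> P" and l: "Fract r pi \<in> loc P"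
  shows "r \<in> P"
proof -
  obtain a s where as: "s \<notin> P" "Fract r pi = Fract a s" using l by (rule locE)
  have "r * s = a * pi" using as(2) maximal_ideal_nonzero_notin[OF P as(1)] pi(1) by (simp add: eq_fract)
  moreover have "a * pi \<in> P" using maximal_ideal_ideal[OF P] pi(2) by (rule ideal_mult)
  ultimately show ?thesis using maximal_ideal_prime[OF P, of r s] as(1) by auto
qed

lemma fract_clear_denominator: "\<exists>s a. s \<noteq> 0 \<and> Fract s 1 * x = Fract a 1"
proof -
  obtain a s where "x = Fract a s" "s \<noteq> 0" by (rule Fract_cases)
  then have "Fract s 1 * x = Fract a 1" by (simp add: eq_fract)
  then show ?thesis using \<open>s \<noteq> 0\<close> by blast
qed


section \<open>The torsion submodule is the direct sum\<close>

lemma torsion_imp_dsum: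
  fixes T :: "'a::idom itself" and f :: "'a set \<Rightarrow> 'a fract"
  assumes D: "dedekind_domain T" and "in_torsion f"
  shows "in_dsum f"
proof -
  obtain r :: 'a where r: "r \<noteq> 0" "\<forall>P\<in>maxideals. Fract r 1 * f P \<in> loc P"
    using assms(2) unfolding in_torsion_def prod_eq_def smultQ_def by auto
  have "r \<in> P" if P: "maximal_ideal P" "f P \<notin> loc P" for P
  proof (rule ccontr)
    assume "r \<notin> P"
    then have "Fract 1 r * (Fract r 1 * f P) \<in> loc P"
      using loc_mult[OF P(1) locI] r(2) P(1) by (simp add: maxideals_def)
    moreover have "Fract 1 r * Fract r 1 = 1" using r(1) by (simp add: One_fract_def eq_fract)
    ultimately show False using P(2) by (simp add: mult.assoc[symmetric])
  qed
  then have "{P \<in> maxideals. f P \<notin> loc P} \<subseteq> {P. maximal_ideal P \<and> r \<in> P}"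
    by (auto simp: maxideals_def)
  then show ?thesis
    unfolding in_dsum_def using finite_maximal_ideals_containing[OF D r(1)] finite_subset by blast
qed

lemma dsum_imp_torsion:
  fixes f :: "'a::idom set \<Rightarrow> 'a fract"
  assumes "in_dsum f" shows "in_torsion f"
proof -
  define B where "B = {P \<in> maxideals. f P \<notin> loc P}"
  define den where "den x = (SOME s. s \<noteq> 0 \<and> (\<exists>a. Fract s 1 * x = Fract a 1))" for x :: "'a fract"
  have den: "den x \<noteq> 0 \<and> (\<exists>a. Fract (den x) 1 * x = Fract a 1)" for x
    unfolding den_def by (rule someI_ex) (use fract_clear_denominator in blast)
  define r where "r = (\<Prod>P\<in>B. den (f P))"
  have "finite B" using assms by (simp add: in_dsum_def B_def)
  then have "r \<noteq> 0" using den by (simp add: r_def)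
  moreover have "Fract r 1 * f P \<in> loc P" if P: "maximal_ideal P" for P
  proof (cases "P \<in> B")
    case True
    have "den (f P) dvd r" unfolding r_def using \<open>finite B\<close> True by (rule dvd_prodI)
    moreover obtain a where "Fract (den (f P)) 1 * f P = Fract a 1" using den by blast
    then have "Fract (den (f P)) 1 * f P \<in> loc P" using loc_of_R[OF P] by simp
    ultimately show ?thesis using loc_mult_dvd[OF P] by blast
  next
    case False
    then have "f P \<in> loc P" using P by (simp add: B_def maxideals_def)
    then show ?thesis by (rule loc_mult[OF P loc_of_R[OF P]])
  qed
  ultimately show ?thesis unfolding in_torsion_def prod_eq_def smultQ_def maxideals_def
    by (intro exI[of _ r]) simp
qed


section \<open>Separating linear functionals\<close>

text \<open>Over a field, a vector outside a subspace is separated from it by a linear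
  functional (extend a basis of the subspace by the vector).\<close>

lemma (in vector_space) separating_functional:
  fixes L :: "'b set"
  assumes L: "subspace L" and e: "e \<notin> L"
  shows "\<exists>g. Vector_Spaces.linear scale (*) g \<and> (\<forall>x\<in>L. g x = 0) \<and> g e = 1"
proof -
  interpret vs: vector_space_pair scale "(*) :: 'a \<Rightarrow> 'a \<Rightarrow> 'a"
    by unfold_locales (auto simp: algebra_simps)
  obtain B where B: "B \<subseteq> L" "independent B" "L \<subseteq> span B"
    using maximal_independent_subset by blast
  have "e \<notin> span B" using e B(1) L span_minimal by blast
  then have ind: "independent (insert e B)" using B(2) independent_insertI by blast
  obtain g where g: "Vector_Spaces.linear scale (*) g" "\<forall>x\<in>insert e B. g x = (if x = e then 1 else 0)"
    using vs.linear_independent_extend[OF ind, of "\<lambda>x. if x = e then 1 else 0"] by blast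
  have "\<forall>x\<in>B. g x = 0" using g(2) e B(1) by auto
  then have "\<forall>x\<in>span B. g x = 0" using vs.linear_eq_0_on_span[OF g(1)] by blast
  then show ?thesis using g B(3) by auto
qed

definition qscale :: "'a::idom fract \<Rightarrow> ('a set \<Rightarrow> 'a fract) \<Rightarrow> ('a set \<Rightarrow> 'a fract)" where
  "qscale c f = (\<lambda>P. c * f P)"

lemma vector_space_qscale: "vector_space (qscale :: 'a::idom fract \<Rightarrow> _)"
  by unfold_locales (auto simp: qscale_def fun_eq_iff algebra_simps)


section \<open>Blocks of maximal ideals\<close>

text \<open>G (n, m) enumerates distinct maximal ideals; block n is {G (n, m) | m}.\<close>

definition block_index :: "(nat \<times> nat \<Rightarrow> 'a set) \<Rightarrow> 'a set \<Rightarrow> nat" where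
  "block_index G P = fst (inv G P)"

definition bounded_on_block :: "(nat \<times> nat \<Rightarrow> 'a::idom set) \<Rightarrow> nat \<Rightarrow> ('a set \<Rightarrow> 'a fract) set" where
  "bounded_on_block G n = {f. \<exists>r. r \<noteq> 0 \<and> (\<forall>m. Fract r 1 * f (G (n, m)) \<in> loc (G (n, m)))}"

definition block_unit :: "(nat \<times> nat \<Rightarrow> 'a::idom set) \<Rightarrow> ('a set \<Rightarrow> 'a) \<Rightarrow> nat \<Rightarrow> 'a set \<Rightarrow> 'a fract" where
  "block_unit G pi n = (\<lambda>P. if P \<in> range G \<and> block_index G P = n then Fract 1 (pi P) else 0)"

definition block_shift :: "(nat \<times> nat \<Rightarrow> 'a::idom set) \<Rightarrow> ('a set \<Rightarrow> 'a) \<Rightarrow> (nat \<Rightarrow> 'a fract)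
    \<Rightarrow> ('a set \<Rightarrow> 'a fract) \<Rightarrow> ('a set \<Rightarrow> 'a fract)" where
  "block_shift G pi t f = (\<lambda>P. if P \<in> range G then f P + t (block_index G P) * Fract 1 (pi P) else f P)"

lemma bounded_on_block_integral:
  assumes "\<And>x. maximal_ideal (G x)" and "\<And>m. f (G (n, m)) \<in> loc (G (n, m))"
  shows "f \<in> bounded_on_block G n"
  unfolding bounded_on_block_def using assms by (intro CollectI exI[of _ 1]) (simp add: fract_collapse)

lemma bounded_on_block_subspace:
  assumes GM: "\<And>x. maximal_ideal (G x)"
  shows "module.subspace qscale (bounded_on_block G n)"
proof -
  interpret vector_space qscale by (rule vector_space_qscale)
  have add: "f + g \<in> bounded_on_block G n"
    if f: "f \<in> bounded_on_block G n" and g: "g \<in> bounded_on_block G n" for f g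
  proof -
    obtain r where r: "r \<noteq> 0" "\<And>m. Fract r 1 * f (G (n, m)) \<in> loc (G (n, m))"
      using f unfolding bounded_on_block_def by blast
    obtain s where s: "s \<noteq> 0" "\<And>m. Fract s 1 * g (G (n, m)) \<in> loc (G (n, m))"
      using g unfolding bounded_on_block_def by blast
    have "Fract (r * s) 1 * (f + g) (G (n, m)) \<in> loc (G (n, m))" for m
      using loc_add[OF GM loc_mult_dvd[OF GM r(2)] loc_mult_dvd[OF GM s(2)]]
      by (simp add: distrib_left)
    then show ?thesis using r(1) s(1) unfolding bounded_on_block_def
      by (intro CollectI exI[of _ "r * s"]) simp
  qed
  have scale: "qscale a f \<in> bounded_on_block G n" if f: "f \<in> bounded_on_block G n" for a f
  proof -
    obtain r where r: "r \<noteq> 0" "\<And>m. Fract r 1 * f (G (n, m)) \<in> loc (G (n, m))"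
      using f unfolding bounded_on_block_def by blast
    obtain s b where sb: "s \<noteq> 0" "Fract s 1 * a = Fract b 1" using fract_clear_denominator by blast
    have sr: "Fract (s * r) 1 = Fract s 1 * Fract r 1" by simp
    have "Fract (s * r) 1 * qscale a f (G (n, m)) = Fract b 1 * (Fract r 1 * f (G (n, m)))" for m
      unfolding sb(2)[symmetric] sr qscale_def by (simp only: ac_simps)
    then have "Fract (s * r) 1 * qscale a f (G (n, m)) \<in> loc (G (n, m))" for m
      using loc_mult[OF GM loc_of_R[OF GM] r(2)] by simp
    then show ?thesis using r(1) sb(1) unfolding bounded_on_block_def
      by (intro CollectI exI[of _ "s * r"]) simp
  qed
  show ?thesis unfolding subspace_def
    using add scale bounded_on_block_integral[OF GM, of "0"] by (simp add: loc_0[OF GM])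
qed

text \<open>The block unit is not in L n: a common denominator r would lie in the infinitely
  many maximal ideals of block n.\<close>

lemma block_unit_unbounded:
  fixes T :: "'a::idom itself" and G :: "nat \<times> nat \<Rightarrow> 'a set"
  assumes D: "dedekind_domain T" and GM: "\<And>x. maximal_ideal (G x)" and Gi: "inj G"
    and pi: "\<And>x. pi (G x) \<in> G x \<and> pi (G x) \<noteq> 0"
  shows "block_unit G pi n \<notin> bounded_on_block G n"
proof
  assume "block_unit G pi n \<in> bounded_on_block G n"
  then obtain r :: 'a where r: "r \<noteq> 0" "\<And>m. Fract r 1 * block_unit G pi n (G (n, m)) \<in> loc (G (n, m))"
    unfolding bounded_on_block_def by blast
  have "Fract r 1 * block_unit G pi n (G (n, m)) = Fract r (pi (G (n, m)))" for m
    using Gi by (simp add: block_unit_def block_index_def)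
  then have "r \<in> G (n, m)" for m using loc_div_mem[OF GM] pi r(2) by metis
  then have "range (\<lambda>m. G (n, m)) \<subseteq> {P. maximal_ideal P \<and> r \<in> P}" using GM by blast
  moreover have "inj (\<lambda>m. G (n, m))" using Gi by (simp add: inj_def)
  then have "infinite (range (\<lambda>m. G (n, m)))" using finite_imageD by blast
  ultimately show False using finite_maximal_ideals_containing[OF D r(1)] finite_subset by blast
qed


section \<open>The isomorphism from block functionals\<close>

text \<open>Given functionals c n as above, the map phi (q, f) shifts the coordinates
  (c 0 f, c 1 f, ...) to (q, c 0 f, c 1 f, ...) and is the desired isomorphism.\<close>

locale block_functionals =
  fixes G :: "nat \<times> nat \<Rightarrow> 'a::idom set" and pi :: "'a set \<Rightarrow> 'a"
    and c :: "nat \<Rightarrow> ('a set \<Rightarrow> 'a fract) \<Rightarrow> 'a fract"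
  assumes G_inj: "inj G" and G_max: "\<And>x. maximal_ideal (G x)"
    and c_lin: "\<And>n. Vector_Spaces.linear qscale (*) (c n)"
    and c_bounded: "\<And>n f. f \<in> bounded_on_block G n \<Longrightarrow> c n f = 0"
    and c_unit: "\<And>n. c n (block_unit G pi n) = 1"
begin

lemma c_add: "c n (f + g) = c n f + c n g"
  using c_lin[of n] unfolding Vector_Spaces.linear_iff by blast

lemma c_scale: "c n (qscale a f) = a * c n f"
  using c_lin[of n] unfolding Vector_Spaces.linear_iff by blast

lemma c_diff: "c n (f - g) = c n f - c n g"
proof -
  have "c n (f - g) + c n g = c n f" using c_add[of n "f - g" g] by simp
  then show ?thesis by (simp add: algebra_simps)
qed

lemma c_eq_if_diff_bounded: "f - h \<in> bounded_on_block G n \<Longrightarrow> c n f = c n h"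
  using c_bounded[of "f - h" n] by (simp add: c_diff)

lemma c_integral_eq:
  assumes "\<And>P. P \<in> maxideals \<Longrightarrow> f P - h P \<in> loc P"
  shows "c n f = c n h"
proof -
  have "f - h \<in> bounded_on_block G n"
    using assms G_max by (intro bounded_on_block_integral) (auto simp: maxideals_def)
  then show ?thesis by (rule c_eq_if_diff_bounded)
qed

lemma c_block_eq:
  assumes "\<And>m. f (G (n, m)) = h (G (n, m))"
  shows "c n f = c n h"
proof -
  have "f - h \<in> bounded_on_block G n"
    using assms loc_0[OF G_max] by (intro bounded_on_block_integral[OF G_max]) simp
  then show ?thesis by (rule c_eq_if_diff_bounded)
qed

lemma c_block_shift: "c n (block_shift G pi t f) = c n f + t n"
proof -
  have "c n (block_shift G pi t f) = c n (f + qscale (t n) (block_unit G pi n))"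
    using G_inj by (intro c_block_eq) (simp add: block_shift_def block_unit_def block_index_def qscale_def)
  then show ?thesis by (simp add: c_add c_scale c_unit)
qed

definition coords :: "'a fract \<Rightarrow> ('a set \<Rightarrow> 'a fract) \<Rightarrow> nat \<Rightarrow> 'a fract" where
  "coords q f n = (case n of 0 \<Rightarrow> q | Suc k \<Rightarrow> c k f)"

definition phi :: "'a fract \<times> ('a set \<Rightarrow> 'a fract) \<Rightarrow> ('a set \<Rightarrow> 'a fract)" where
  "phi x = block_shift G pi (\<lambda>n. coords (fst x) (snd x) n - c n (snd x)) (snd x)"

lemma c_phi: "c n (phi (q, f)) = coords q f n"
  unfolding phi_def by (simp add: c_block_shift)

lemma phi_add: "phi (q + q', f + f') = phi (q, f) + phi (q', f')"
  and phi_scale: "phi (a * q, qscale a f) = qscale a (phi (q, f))"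
  and phi_diff: "phi (q - q', f - f') = phi (q, f) - phi (q', f')"
  unfolding phi_def block_shift_def coords_def qscale_def
  by (auto simp: fun_eq_iff c_add c_scale[unfolded qscale_def] c_diff algebra_simps split: nat.split)

lemma prod_eq_refl: "prod_eq f f"
  by (simp add: prod_eq_def maxideals_def loc_0)

lemma phi_injective:
  assumes "prod_eq (phi (q, f)) (phi (q', f'))"
  shows "q = q' \<and> prod_eq f f'"
proof -
  have pd: "phi (q - q', f - f') P \<in> loc P" if "P \<in> maxideals" for P
    using assms that by (simp add: prod_eq_def phi_diff)
  have "coords (q - q') (f - f') n = 0" for n
    using c_phi c_integral_eq[of "phi (q - q', f - f')" 0 n] pd c_scale[of n 0 0]
    by (simp add: qscale_def zero_fun_def)
  then have "q = q'" "c k (f - f') = 0" for k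
    using coords_def by (metis diff_eq_diff_eq diff_self nat.case)+
  moreover from this have "phi (q - q', f - f') = f - f'"
    by (simp add: phi_def block_shift_def coords_def fun_eq_iff split: nat.split)
  ultimately show ?thesis using pd by (simp add: prod_eq_def)
qed

lemma phi_surjective: "phi (c 0 g, block_shift G pi (\<lambda>n. c (Suc n) g - c n g) g) = g"
proof -
  define u where "u = block_shift G pi (\<lambda>n. c (Suc n) g - c n g) g"
  have c_u: "c n u = c (Suc n) g" for n unfolding u_def by (simp add: c_block_shift)
  have coords_u: "coords (c 0 g) u n = c n g" for n by (cases n) (simp_all add: coords_def c_u)
  have "phi (c 0 g, u) = block_shift G pi (\<lambda>n. c n g - c (Suc n) g) u"
    unfolding phi_def fst_conv snd_conv coords_u c_u ..
  then show ?thesis by (simp add: u_def block_shift_def fun_eq_iff algebra_simps)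
qed

lemma iso: "is_iso_Q_plus_prod phi"
  unfolding is_iso_Q_plus_prod_def
proof (intro conjI allI impI)
  fix x y :: "'a fract \<times> ('a set \<Rightarrow> 'a fract)"
  assume "sum_eq x y"
  then obtain q f f' where xy: "x = (q, f)" "y = (q, f')" and pe: "prod_eq f f'"
    unfolding sum_eq_def by (metis prod.collapse)
  have "c n f = c n f'" for n using pe by (intro c_integral_eq) (simp add: prod_eq_def)
  then have "phi (q, f) - phi (q, f') = f - f'"
    by (simp add: phi_def block_shift_def coords_def fun_eq_iff split: nat.split)
  then show "prod_eq (phi x) (phi y)" using pe by (simp add: xy prod_eq_def fun_eq_iff)
next
  fix q f q' f'
  show "prod_eq (phi (q + q', \<lambda>P. f P + f' P)) (\<lambda>P. phi (q, f) P + phi (q', f') P)"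
    using phi_add[of q q' f f'] prod_eq_refl by (simp add: plus_fun_def)
next
  fix r q f
  show "prod_eq (phi (smultQ r q, \<lambda>P. smultQ r (f P))) (\<lambda>P. smultQ r (phi (q, f) P))"
    using phi_scale[of "Fract r 1" q f] prod_eq_refl by (simp add: smultQ_def qscale_def)
next
  fix x y :: "'a fract \<times> ('a set \<Rightarrow> 'a fract)"
  assume "prod_eq (phi x) (phi y)"
  then show "sum_eq x y" using phi_injective by (metis prod.collapse sum_eq_def)
next
  fix g :: "'a set \<Rightarrow> 'a fract"
  show "\<exists>x. prod_eq (phi x) g" using phi_surjective prod_eq_refl by metis
qed

end


section \<open>Existence of the block functionals\<close>

lemma Q_plus_prod_iso_exists:
  fixes T :: "'a::idom itself"
  assumes D: "dedekind_domain T" and inf: "infinite (maxideals :: 'a set set)"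
  shows "\<exists>\<phi> :: 'a fract \<times> ('a set \<Rightarrow> 'a fract) \<Rightarrow> ('a set \<Rightarrow> 'a fract). is_iso_Q_plus_prod \<phi>"
proof -
  have "infinite (maxideals - {{0::'a}})" using inf by (rule infinite_remove)
  then obtain h :: "nat \<Rightarrow> 'a set" where h: "inj h" "range h \<subseteq> maxideals - {{0}}"
    using infinite_countable_subset by blast
  define G where "G = h \<circ> prod_encode"
  have Gi: "inj G" unfolding G_def using h(1) inj_prod_encode[of UNIV] by (rule inj_compose)
  have GX: "G x \<in> maxideals - {{0}}" for x using h(2) unfolding G_def by auto
  then have GM: "maximal_ideal (G x)" for x by (simp add: maxideals_def)
  define pi where "pi = (\<lambda>P :: 'a set. SOME x. x \<in> P \<and> x \<noteq> 0)"
  have pi: "pi (G x) \<in> G x \<and> pi (G x) \<noteq> 0" for x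
    unfolding pi_def by (rule someI_ex) (use GX[of x] maximal_ideal_0[OF GM[of x]] in blast)
  have "\<exists>g. Vector_Spaces.linear qscale (*) g \<and> (\<forall>f\<in>bounded_on_block G n. g f = 0)
          \<and> g (block_unit G pi n) = 1" for n
    using vector_space.separating_functional[OF vector_space_qscale
        bounded_on_block_subspace[OF GM] block_unit_unbounded[OF D GM Gi pi]] .
  then obtain c where "\<And>n. Vector_Spaces.linear qscale (*) (c n) \<and> (\<forall>f\<in>bounded_on_block G n. c n f = 0)
          \<and> c n (block_unit G pi n) = 1"
    by metis
  then interpret block_functionals G pi c
    by (intro block_functionals.intro) (use Gi GM in auto)
  show ?thesis using iso by blast
qed


theorem mainTheorem10:
  fixes T :: "'a::idom itself"
  assumes "dedekind_domain T"
  shows "(\<forall>f :: 'a set \<Rightarrow> 'a fract. in_torsion f \<longleftrightarrow> in_dsum f) \<and>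
         ((infinite (maxideals :: 'a set set) \<and>
           (card_of (UNIV :: 'a set), card_of (Func (maxideals :: 'a set set) (UNIV :: 'a set))) \<in> ordLess)
          \<longrightarrow> (\<exists>\<phi> :: 'a fract \<times> ('a set \<Rightarrow> 'a fract) \<Rightarrow> ('a set \<Rightarrow> 'a fract). is_iso_Q_plus_prod \<phi>))"
  using torsion_imp_dsum[OF assms] dsum_imp_torsion Q_plus_prod_iso_exists[OF assms] by blast

end
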